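(* For every integer $n\ge 1$, the polytope $\overline{Q}_n=\sum_{S\in\mathcal{I}_n}\Delta_S\subseteq\mathbb{R}^{n+1}$ is combinatorially equivalent to the $n$-th stellohedron $\mathrm{Stell}_n$.
   Context: Sums are Minkowski sums. $\mathcal{I}_n=\{S\cup\{n+1\}: S\subseteq[n],\ |S|\in\{1,2\}\}$ and, for $S\subseteq[n+1]$, $\Delta_S=\mathrm{conv}\{e_i: i\in S\}\subseteq\mathbb{R}^{n+1}$. Let $\mathrm{st}_n$ be the star graph on $[n+1]$ with edges $\{i,n+1\}$, $i=1,\dots,n$. The stellohedron is the graph associahedron of $\mathrm{st}_n$: $\mathrm{Stell}_n=\sum_{S}\Delta_S$, the sum over all nonempty $S\subseteq[n+1]$ inducing a connected subgraph of $\mathrm{st}_n$ (i.e. $S$ a singleton or $n+1\in S$). Two polytopes are combinatorially equivalent if their face posets (ordered by inclusion) are isomorphic. *)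

theory Defs
  imports "HOL-Analysis.Analysis" "HOL-Library.Set_Algebras"
begin

text \<open>Coordinates of the ambient space are indexed by a finite type 'd; the
  distinguished element c plays the role of the index n+1, and the remaining
  elements play the role of [n].\<close>

definition simplex_of :: "'d::finite set \<Rightarrow> (real^'d) set" where
  "simplex_of S = convex hull ((\<lambda>i. axis i 1) ` S)"

definition minkowski_sum :: "'a set \<Rightarrow> ('a \<Rightarrow> (real^'d) set) \<Rightarrow> (real^'d) set" where
  "minkowski_sum I D = (\<Sum>S\<in>I. D S)"

definition I_family :: "'d::finite \<Rightarrow> 'd set set" where
  "I_family c = {insert c S | S. S \<subseteq> UNIV - {c} \<and> card S \<in> {1,2}}"

text \<open>Connected nonempty subsets of the star graph with centre c.\<close>
definition star_tubes :: "'d::finite \<Rightarrow> 'd set set" where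
  "star_tubes c = {S. S \<noteq> {} \<and> (card S = 1 \<or> c \<in> S)}"

definition Qbar :: "'d::finite \<Rightarrow> (real^'d) set" where
  "Qbar c = minkowski_sum (I_family c) simplex_of"

definition stellohedron :: "'d::finite \<Rightarrow> (real^'d) set" where
  "stellohedron c = minkowski_sum (star_tubes c) simplex_of"

definition face_poset :: "'a::real_vector set \<Rightarrow> 'a set set" where
  "face_poset P = {F. F face_of P}"

definition comb_equiv :: "'a::real_vector set \<Rightarrow> 'b::real_vector set \<Rightarrow> bool" where
  "comb_equiv P Q \<longleftrightarrow> (\<exists>f. bij_betw f (face_poset P) (face_poset Q) \<and>
     (\<forall>F\<in>face_poset P. \<forall>G\<in>face_poset P. F \<subseteq> G \<longleftrightarrow> f F \<subseteq> f G))"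

end

theory Submission
  imports Defs
begin

(* The stellohedron is Qbar_n plus the remaining tube simplices: the points
   Delta_{i}, which are mere translations, and the simplices Delta_S with n+1 in S and |S| >= 3.
   Adding to P a polytope Q whose normal fan is refined by that of P does not change the face
   lattice, since every face of P + Q is selected by exactly the same linear functionals as the
   corresponding face of P. The normal fan of a Minkowski sum refines those of its summands, so
   it remains to see that the normal fan of Qbar_n refines that of Delta_S: a functional w is
   maximised over Delta_S at the vertex e_i iff w_i >= w_j for all j in S, and each single
   comparison of w_i with w_j is already decided on a summand Delta_T of Qbar_n with
   {i, j, n+1} <= T <= S, which exists because |S| >= 3. *)

definition max_face :: "'a::real_inner set \<Rightarrow> 'a \<Rightarrow> 'a set" where
  "max_face P w = {x \<in> P. \<forall>y\<in>P. w \<bullet> y \<le> w \<bullet> x}"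

lemma max_face_subset: "max_face P w \<subseteq> P"
  by (auto simp: max_face_def)

lemma max_face_singleton [simp]: "max_face {x} w = {x}"
  by (auto simp: max_face_def)

lemma max_face_nonempty:
  fixes P :: "'a::real_inner set"
  assumes "compact P" "P \<noteq> {}"
  shows "max_face P w \<noteq> {}"
proof -
  have "continuous_on P (\<lambda>x. w \<bullet> x)"
    by (intro continuous_intros)
  then obtain x where "x \<in> P" "\<forall>y\<in>P. w \<bullet> y \<le> w \<bullet> x"
    using continuous_attains_sup[OF assms] by blast
  then show ?thesis
    unfolding max_face_def by auto
qed

lemma max_face_face_of:
  fixes P :: "'a::real_inner set"
  assumes "convex P"
  shows "max_face P w face_of P"
proof (cases "max_face P w = {}")
  case False
  then obtain x where x: "x \<in> max_face P w"
    by auto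
  then have "max_face P w = P \<inter> {y. w \<bullet> y = w \<bullet> x}"
    by (auto simp: max_face_def intro: order.antisym)
  moreover have "\<And>y. y \<in> P \<Longrightarrow> w \<bullet> y \<le> w \<bullet> x"
    using x by (auto simp: max_face_def)
  ultimately show ?thesis
    using face_of_Int_supporting_hyperplane_le[OF assms] by metis
qed simp

lemma face_poset_polytope:
  fixes P :: "'a::euclidean_space set"
  assumes "polytope P"
  shows "face_poset P = insert {} (range (max_face P))"
proof (intro equalityI subsetI)
  fix F assume "F \<in> face_poset P"
  then have "F exposed_face_of P"
    using assms exposed_face_of_polyhedron polytope_imp_polyhedron by (auto simp: face_poset_def)
  then obtain a b where ab: "P \<subseteq> {x. a \<bullet> x \<le> b}" "F = P \<inter> {x. a \<bullet> x = b}"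
    unfolding exposed_face_of_def by blast
  show "F \<in> insert {} (range (max_face P))"
  proof (cases "F = {}")
    case False
    then obtain x where "x \<in> F"
      by blast
    then have "F = max_face P a"
      using ab by (auto simp: max_face_def intro: order.antisym)
    then show ?thesis
      by blast
  qed simp
next
  fix F assume "F \<in> insert {} (range (max_face P))"
  then show "F \<in> face_poset P"
    using assms max_face_face_of polytope_imp_convex by (auto simp: face_poset_def)
qed

lemma plus_mem_max_face_set_plus:
  assumes "a \<in> A" "b \<in> B"
  shows "a + b \<in> max_face (A + B) w \<longleftrightarrow> a \<in> max_face A w \<and> b \<in> max_face B w"
proof
  assume ab: "a + b \<in> max_face (A + B) w"
  have "w \<bullet> a' \<le> w \<bullet> a" if "a' \<in> A" for a'
  proof -
    have "w \<bullet> (a' + b) \<le> w \<bullet> (a + b)"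
      using ab set_plus_intro[OF that assms(2)] unfolding max_face_def by blast
    then show ?thesis
      by (simp add: inner_add_right)
  qed
  moreover have "w \<bullet> b' \<le> w \<bullet> b" if "b' \<in> B" for b'
  proof -
    have "w \<bullet> (a + b') \<le> w \<bullet> (a + b)"
      using ab set_plus_intro[OF assms(1) that] unfolding max_face_def by blast
    then show ?thesis
      by (simp add: inner_add_right)
  qed
  ultimately show "a \<in> max_face A w \<and> b \<in> max_face B w"
    using assms by (simp add: max_face_def)
next
  assume "a \<in> max_face A w \<and> b \<in> max_face B w"
  then show "a + b \<in> max_face (A + B) w"
    unfolding max_face_def by (auto simp: inner_add_right intro!: add_mono elim!: set_plus_elim)
qed

lemma max_face_set_plus: "max_face (A + B) w = max_face A w + max_face B w"
proof (intro equalityI subsetI)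
  fix x assume x: "x \<in> max_face (A + B) w"
  then have "x \<in> A + B"
    using max_face_subset by blast
  then obtain a b where "a \<in> A" "b \<in> B" "x = a + b"
    by (auto elim: set_plus_elim)
  then show "x \<in> max_face A w + max_face B w"
    using x plus_mem_max_face_set_plus by blast
next
  fix x assume "x \<in> max_face A w + max_face B w"
  then obtain a b where ab: "a \<in> max_face A w" "b \<in> max_face B w" "x = a + b"
    by (auto elim: set_plus_elim)
  moreover have "a \<in> A" "b \<in> B"
    using ab(1,2) max_face_subset by blast+
  ultimately show "x \<in> max_face (A + B) w"
    using plus_mem_max_face_set_plus by blast
qed

lemma max_face_sum: "max_face (\<Sum>S\<in>I. D S) w = (\<Sum>S\<in>I. max_face (D S) w)"
  by (induction I rule: infinite_finite_induct) (simp_all add: max_face_set_plus)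

lemma max_face_cancel:
  assumes "max_face (A + B) w \<subseteq> max_face (A + B) w'" and "max_face B w \<noteq> {}"
  shows "max_face A w \<subseteq> max_face A w'"
proof
  fix a assume a: "a \<in> max_face A w"
  obtain b where b: "b \<in> max_face B w"
    using assms(2) by blast
  have ab: "a \<in> A" "b \<in> B"
    using a b max_face_subset by blast+
  with a b have "a + b \<in> max_face (A + B) w"
    by (simp add: plus_mem_max_face_set_plus)
  with assms(1) have "a + b \<in> max_face (A + B) w'"
    by blast
  with ab show "a \<in> max_face A w'"
    by (simp add: plus_mem_max_face_set_plus)
qed

lemma max_face_convex_hull_Int: "max_face (convex hull V) w \<inter> V = max_face V w"
proof -
  have halfspace: "convex hull V \<subseteq> {y. w \<bullet> y \<le> w \<bullet> x}" if "x \<in> max_face V w" for x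
    using that by (intro hull_minimal) (auto simp: max_face_def convex_halfspace_le)
  show ?thesis
  proof (intro equalityI subsetI)
    fix x assume "x \<in> max_face (convex hull V) w \<inter> V"
    then show "x \<in> max_face V w"
      unfolding max_face_def by (blast intro: hull_inc)
  next
    fix x assume x: "x \<in> max_face V w"
    then show "x \<in> max_face (convex hull V) w \<inter> V"
      using halfspace[OF x] unfolding max_face_def by (blast intro: hull_inc)
  qed
qed

lemma max_face_convex_hull:
  fixes V :: "'a::euclidean_space set"
  assumes "compact V"
  shows "max_face (convex hull V) w = convex hull (max_face V w)"
proof
  obtain V' where "V' \<subseteq> V" and face: "max_face (convex hull V) w = convex hull V'"
    using face_of_convex_hull_subset[OF assms max_face_face_of[OF convex_convex_hull]] by blast
  then have "V' \<subseteq> max_face (convex hull V) w \<inter> V"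
    using hull_subset[of V' convex] by blast
  then have "V' \<subseteq> max_face V w"
    by (simp only: max_face_convex_hull_Int)
  then show "max_face (convex hull V) w \<subseteq> convex hull (max_face V w)"
    unfolding face by (rule hull_mono)
next
  show "convex hull (max_face V w) \<subseteq> max_face (convex hull V) w"
  proof (rule hull_minimal)
    show "max_face V w \<subseteq> max_face (convex hull V) w"
      using max_face_convex_hull_Int[of V w] by blast
    show "convex (max_face (convex hull V) w)"
      by (rule face_of_imp_convex[OF max_face_face_of[OF convex_convex_hull]])
  qed
qed

lemma polytope_set_plus:
  fixes P Q :: "'a::euclidean_space set"
  assumes "polytope P" "polytope Q"
  shows "polytope (P + Q)"
proof -
  obtain V W where "finite V" "P = convex hull V" "finite W" "Q = convex hull W"
    using assms unfolding polytope_def by auto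
  then show ?thesis
    by (metis convex_hull_set_plus finite_set_plus polytope_convex_hull)
qed

lemma polytope_sum:
  fixes D :: "'b \<Rightarrow> 'a::euclidean_space set"
  shows "(\<And>S. S \<in> I \<Longrightarrow> polytope (D S)) \<Longrightarrow> polytope (\<Sum>S\<in>I. D S)"
  by (induction I rule: infinite_finite_induct) (simp_all add: polytope_sing polytope_set_plus)

lemma sum_set_nonempty:
  fixes D :: "'b \<Rightarrow> 'a::comm_monoid_add set"
  shows "(\<And>S. S \<in> I \<Longrightarrow> D S \<noteq> {}) \<Longrightarrow> (\<Sum>S\<in>I. D S) \<noteq> {}"
  by (induction I rule: infinite_finite_induct) (auto intro: set_plus_intro)

text \<open>\<open>max_face P w \<subseteq> max_face P w'\<close> says that \<open>w'\<close> lies in the closed normal cone of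
  \<open>P\<close> at the face \<open>max_face P w\<close>; the definition thus expresses that the normal fan of \<open>P\<close>
  refines that of \<open>Q\<close>.\<close>

definition normal_fan_refines :: "'a::real_inner set \<Rightarrow> 'a set \<Rightarrow> bool" where
  "normal_fan_refines P Q \<longleftrightarrow>
     (\<forall>w w'. max_face P w \<subseteq> max_face P w' \<longrightarrow> max_face Q w \<subseteq> max_face Q w')"

lemma normal_fan_refines_singleton: "normal_fan_refines P {x}"
  by (simp add: normal_fan_refines_def)

lemma normal_fan_refines_set_plus:
  assumes "normal_fan_refines P Q" "normal_fan_refines P R"
  shows "normal_fan_refines P (Q + R)"
  using assms unfolding normal_fan_refines_def max_face_set_plus by (meson set_plus_mono2)

lemma normal_fan_refines_sum:
  "(\<And>S. S \<in> J \<Longrightarrow> normal_fan_refines P (D S)) \<Longrightarrow> normal_fan_refines P (\<Sum>S\<in>J. D S)"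
  by (induction J rule: infinite_finite_induct)
    (simp_all add: normal_fan_refines_singleton normal_fan_refines_set_plus)

lemma normal_fan_refines_summand:
  assumes "finite I" "S \<in> I"
    and "\<And>T. T \<in> I \<Longrightarrow> compact (D T)" "\<And>T. T \<in> I \<Longrightarrow> D T \<noteq> {}"
  shows "normal_fan_refines (\<Sum>T\<in>I. D T) (D S)"
  unfolding normal_fan_refines_def
proof (intro allI impI)
  fix w w' assume sub: "max_face (\<Sum>T\<in>I. D T) w \<subseteq> max_face (\<Sum>T\<in>I. D T) w'"
  have split: "(\<Sum>T\<in>I. D T) = D S + (\<Sum>T\<in>I - {S}. D T)"
    using sum.remove[OF assms(1,2)] .
  have "max_face (\<Sum>T\<in>I - {S}. D T) w \<noteq> {}"
    unfolding max_face_sum using assms(3,4) by (intro sum_set_nonempty max_face_nonempty) auto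
  with sub show "max_face (D S) w \<subseteq> max_face (D S) w'"
    unfolding split by (rule max_face_cancel)
qed

lemma normal_fan_refines_convex_hull:
  fixes V :: "'a::euclidean_space set"
  assumes "compact V" "normal_fan_refines P V"
  shows "normal_fan_refines P (convex hull V)"
  using assms(2) unfolding normal_fan_refines_def max_face_convex_hull[OF assms(1)]
  by (meson hull_mono)

lemma comb_equiv_if_max_face_subset_iff:
  fixes P K :: "'a::euclidean_space set"
  assumes P: "polytope P" "P \<noteq> {}" and K: "polytope K" "K \<noteq> {}"
    and max_face_subset_iff: "\<And>w w'. max_face K w \<subseteq> max_face K w' \<longleftrightarrow> max_face P w \<subseteq> max_face P w'"
  shows "comb_equiv P K"
proof -
  have nonempty: "max_face P w \<noteq> {}" "max_face K w \<noteq> {}" for w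
    using P K by (simp_all add: max_face_nonempty polytope_imp_compact)
  define pick where "pick F = (SOME w. F = max_face P w)" for F
  define f where "f F = (if F = {} then {} else max_face K (pick F))" for F
  have f_max_face: "f (max_face P w) = max_face K w" for w
  proof -
    have pick: "max_face P (pick (max_face P w)) = max_face P w"
      unfolding pick_def
      by (rule someI[of "\<lambda>w'. max_face P w = max_face P w'" w, THEN sym]) (rule refl)
    have "max_face K (pick (max_face P w)) \<subseteq> max_face K w"
      using max_face_subset_iff[of "pick (max_face P w)" w] pick by simp
    moreover have "max_face K w \<subseteq> max_face K (pick (max_face P w))"
      using max_face_subset_iff[of w "pick (max_face P w)"] pick by simp
    ultimately show ?thesis
      using nonempty(1)[of w] unfolding f_def by simp
  qed
  have f_empty: "f {} = {}"
    by (simp add: f_def)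
  have subset_iff_f: "F \<subseteq> G \<longleftrightarrow> f F \<subseteq> f G" if "F \<in> face_poset P" "G \<in> face_poset P" for F G
  proof -
    from that consider "F = {}" | w where "F = max_face P w" "G = {}"
      | w w' where "F = max_face P w" "G = max_face P w'"
      unfolding face_poset_polytope[OF P(1)] by blast
    then show ?thesis
      by cases (simp_all add: f_empty f_max_face max_face_subset_iff nonempty)
  qed
  have "f ` face_poset P = face_poset K"
    unfolding face_poset_polytope[OF P(1)] face_poset_polytope[OF K(1)]
    by (simp add: f_empty f_max_face image_image)
  moreover have "inj_on f (face_poset P)"
  proof (rule inj_onI)
    fix F G assume "F \<in> face_poset P" "G \<in> face_poset P" "f F = f G"
    then show "F = G"
      using subset_iff_f[of F G] subset_iff_f[of G F] by blast
  qed
  ultimately have "bij_betw f (face_poset P) (face_poset K)"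
    unfolding bij_betw_def by blast
  with subset_iff_f show ?thesis
    unfolding comb_equiv_def by (intro exI[of _ f]) blast
qed

lemma comb_equiv_set_plus:
  fixes P Q :: "'a::euclidean_space set"
  assumes "polytope P" "P \<noteq> {}" "polytope Q" "Q \<noteq> {}" and "normal_fan_refines P Q"
  shows "comb_equiv P (P + Q)"
proof (rule comb_equiv_if_max_face_subset_iff)
  show "polytope P" "P \<noteq> {}" "polytope (P + Q)"
    using assms by (simp_all add: polytope_set_plus)
  show "P + Q \<noteq> {}"
    using assms(2,4) by (auto simp: set_plus_def)
  fix w w'
  show "max_face (P + Q) w \<subseteq> max_face (P + Q) w' \<longleftrightarrow> max_face P w \<subseteq> max_face P w'"
  proof
    assume "max_face (P + Q) w \<subseteq> max_face (P + Q) w'"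
    moreover have "max_face Q w \<noteq> {}"
      using assms(3,4) by (simp add: max_face_nonempty polytope_imp_compact)
    ultimately show "max_face P w \<subseteq> max_face P w'"
      by (rule max_face_cancel)
  next
    assume sub: "max_face P w \<subseteq> max_face P w'"
    then have "max_face Q w \<subseteq> max_face Q w'"
      using assms(5) unfolding normal_fan_refines_def by blast
    with sub show "max_face (P + Q) w \<subseteq> max_face (P + Q) w'"
      unfolding max_face_set_plus by (rule set_plus_mono2)
  qed
qed

lemma polytope_simplex_of: "polytope (simplex_of S)"
  unfolding simplex_of_def by (simp add: polytope_convex_hull)

lemma simplex_of_eq_empty_iff [simp]: "simplex_of S = {} \<longleftrightarrow> S = {}"
  by (simp add: simplex_of_def)

lemma simplex_of_singleton: "simplex_of {i} = {axis i 1}"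
  by (simp add: simplex_of_def)

lemma axis_mem_max_face_axes:
  fixes w :: "real^'d"
  assumes "i \<in> S"
  shows "axis i 1 \<in> max_face ((\<lambda>j. axis j 1) ` S) w \<longleftrightarrow> (\<forall>j\<in>S. w $ j \<le> w $ i)"
  using assms by (auto simp: max_face_def inner_axis)

lemma axis_mem_max_face_simplex_of:
  fixes w :: "real^'d"
  assumes "i \<in> S"
  shows "axis i 1 \<in> max_face (simplex_of S) w \<longleftrightarrow> (\<forall>j\<in>S. w $ j \<le> w $ i)"
proof -
  have "axis i 1 \<in> max_face (simplex_of S) w \<longleftrightarrow> axis i 1 \<in> max_face ((\<lambda>j. axis j 1) ` S) w"
    using assms max_face_convex_hull_Int unfolding simplex_of_def by blast
  then show ?thesis
    using axis_mem_max_face_axes[OF assms] by simp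
qed

lemma normal_fan_refines_simplex_of:
  assumes "\<And>i j. i \<in> S \<Longrightarrow> j \<in> S \<Longrightarrow>
    \<exists>T\<subseteq>S. i \<in> T \<and> j \<in> T \<and> normal_fan_refines P (simplex_of T)"
  shows "normal_fan_refines P (simplex_of S)"
  unfolding simplex_of_def
proof (rule normal_fan_refines_convex_hull)
  show "compact ((\<lambda>i. axis i 1) ` S)"
    by (simp add: finite_imp_compact)
  show "normal_fan_refines P ((\<lambda>i. axis i 1) ` S)"
    unfolding normal_fan_refines_def
  proof (intro allI impI subsetI)
    fix w w' x
    assume sub: "max_face P w \<subseteq> max_face P w'" and x: "x \<in> max_face ((\<lambda>i. axis i 1) ` S) w"
    have "x \<in> (\<lambda>i. axis i 1) ` S"
      using x max_face_subset by blast
    then obtain i where i: "i \<in> S" "x = axis i 1"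
      by blast
    have w_max: "\<forall>k\<in>S. w $ k \<le> w $ i"
      using x unfolding i(2) axis_mem_max_face_axes[OF i(1)] .
    have "w' $ j \<le> w' $ i" if j: "j \<in> S" for j
    proof -
      obtain T where T: "T \<subseteq> S" "i \<in> T" "j \<in> T" "normal_fan_refines P (simplex_of T)"
        using assms[OF i(1) j] by blast
      have "axis i 1 \<in> max_face (simplex_of T) w"
        unfolding axis_mem_max_face_simplex_of[OF T(2)] using w_max T(1) by blast
      moreover have "max_face (simplex_of T) w \<subseteq> max_face (simplex_of T) w'"
        using T(4) sub unfolding normal_fan_refines_def by blast
      ultimately have "axis i 1 \<in> max_face (simplex_of T) w'"
        by blast
      then show ?thesis
        unfolding axis_mem_max_face_simplex_of[OF T(2)] using T(3) by blast
    qed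
    then show "x \<in> max_face ((\<lambda>i. axis i 1) ` S) w'"
      unfolding i(2) axis_mem_max_face_axes[OF i(1)] by blast
  qed
qed

lemma I_family_subset_star_tubes: "I_family c \<subseteq> star_tubes c"
  by (auto simp: I_family_def star_tubes_def)

lemma I_family_member_nonempty: "T \<in> I_family c \<Longrightarrow> T \<noteq> {}"
  by (auto simp: I_family_def)

lemma I_family_member_between:
  fixes c :: "'d::finite"
  assumes "c \<in> S" "3 \<le> card S" "i \<in> S" "j \<in> S"
  shows "\<exists>T\<in>I_family c. T \<subseteq> S \<and> i \<in> T \<and> j \<in> T"
proof -
  have "card ({i, j} - {c}) \<le> card {i, j}"
    by (simp add: card_mono)
  also have "\<dots> \<le> 2"
    by (simp add: card_insert_if)
  finally have "card ({i, j} - {c}) \<le> 2" .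
  moreover have "{i, j} - {c} \<subseteq> S - {c}" "2 \<le> card (S - {c})"
    using assms by (auto simp: card_Diff_singleton)
  ultimately obtain B where B: "{i, j} - {c} \<subseteq> B" "B \<subseteq> S - {c}" "card B = 2"
    using exists_subset_between[of "{i, j} - {c}" 2 "S - {c}"] by auto
  then have "insert c B \<in> I_family c"
    unfolding I_family_def by auto
  moreover have "insert c B \<subseteq> S" "i \<in> insert c B" "j \<in> insert c B"
    using B assms by auto
  ultimately show ?thesis
    by blast
qed

lemma star_tubes_diff_I_family:
  fixes c :: "'d::finite"
  assumes "S \<in> star_tubes c - I_family c"
  shows "(\<exists>i. S = {i}) \<or> c \<in> S \<and> 3 \<le> card S"
proof (cases "card S = 1")
  case True
  then show ?thesis
    by (auto simp: card_1_singleton_iff)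
next
  case False
  then have S: "S \<noteq> {}" "c \<in> S" "S \<notin> I_family c"
    using assms unfolding star_tubes_def by auto
  have "card S \<noteq> 2"
  proof
    assume "card S = 2"
    then have "card (S - {c}) = 1"
      using S(2) by (simp add: card_Diff_singleton)
    then have "S \<in> I_family c"
      unfolding I_family_def using S(2) by (auto intro!: exI[of _ "S - {c}"])
    with S(3) show False
      by simp
  qed
  moreover have "card S \<noteq> 0"
    using S(1) by simp
  ultimately have "3 \<le> card S"
    using False by linarith
  with S(2) show ?thesis
    by blast
qed

lemma Qbar_eq_sum: "Qbar c = (\<Sum>T\<in>I_family c. simplex_of T)"
  by (simp add: Qbar_def minkowski_sum_def)

lemma polytope_Qbar: "polytope (Qbar c)"
  unfolding Qbar_eq_sum by (intro polytope_sum polytope_simplex_of)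

lemma Qbar_nonempty: "Qbar c \<noteq> {}"
  unfolding Qbar_eq_sum by (intro sum_set_nonempty) (simp add: I_family_member_nonempty)

lemma stellohedron_eq_Qbar_plus:
  "stellohedron c = Qbar c + (\<Sum>S\<in>star_tubes c - I_family c. simplex_of S)"
  unfolding stellohedron_def minkowski_sum_def Qbar_eq_sum
  using sum.subset_diff[OF I_family_subset_star_tubes finite, of simplex_of] by (simp add: add.commute)

lemma normal_fan_refines_Qbar:
  fixes c :: "'d::finite"
  assumes "S \<in> star_tubes c - I_family c"
  shows "normal_fan_refines (Qbar c) (simplex_of S)"
  using star_tubes_diff_I_family[OF assms]
proof
  assume "\<exists>i. S = {i}"
  then show ?thesis
    by (auto simp: simplex_of_singleton normal_fan_refines_singleton)
next
  assume S: "c \<in> S \<and> 3 \<le> card S"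
  show ?thesis
  proof (rule normal_fan_refines_simplex_of)
    fix i j assume "i \<in> S" "j \<in> S"
    then obtain T where T: "T \<in> I_family c" "T \<subseteq> S" "i \<in> T" "j \<in> T"
      using I_family_member_between S by blast
    have "normal_fan_refines (Qbar c) (simplex_of T)"
      unfolding Qbar_eq_sum using T(1)
      by (intro normal_fan_refines_summand)
        (simp_all add: polytope_imp_compact polytope_simplex_of I_family_member_nonempty)
    with T(2-4) show "\<exists>T\<subseteq>S. i \<in> T \<and> j \<in> T \<and> normal_fan_refines (Qbar c) (simplex_of T)"
      by blast
  qed
qed

theorem mainTheorem13:
  fixes c :: "'d::finite"
  assumes "CARD('d) \<ge> 2"
  shows "comb_equiv (Qbar c) (stellohedron c)"
  unfolding stellohedron_eq_Qbar_plus
proof (rule comb_equiv_set_plus)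
  show "polytope (Qbar c)" "Qbar c \<noteq> {}"
    by (simp_all add: polytope_Qbar Qbar_nonempty)
  show "polytope (\<Sum>S\<in>star_tubes c - I_family c. simplex_of S)"
    by (intro polytope_sum polytope_simplex_of)
  show "(\<Sum>S\<in>star_tubes c - I_family c. simplex_of S) \<noteq> {}"
    by (intro sum_set_nonempty) (simp add: star_tubes_def)
  show "normal_fan_refines (Qbar c) (\<Sum>S\<in>star_tubes c - I_family c. simplex_of S)"
    by (intro normal_fan_refines_sum normal_fan_refines_Qbar)
qed

end
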